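(* In any additive poset, any set of pairwise independent nonzero elements is linearly independent over $\mathbb{Z}/2\mathbb{Z}$.
   Context: An additive poset is a pair $(A,\le)$ where $A$ is an abelian group and $\le$ is a partial order on $A$ such that for all $a,b,c\in A$: $(\ast)$ if $b\le a$ and $c\le a$ then $b+c\le a$; $(\ast\ast)$ if $a\le b$ and $a\le c$ then $a\le a+b+c$. Every element satisfies $a+a=0$, so $A$ is a $\mathbb{Z}/2\mathbb{Z}$-vector space. Elements $a,b\in A$ are called independent if $a\le a+b$; this relation is symmetric. *)

theory Defs
  imports Main
begin

text \<open>An additive poset: an abelian group (the carrier is the whole type 'a) together
  with a partial order le satisfying the two axioms (*) and (**).\<close>
definition additive_poset :: "('a::ab_group_add \<Rightarrow> 'a \<Rightarrow> bool) \<Rightarrow> bool" where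
  "additive_poset le \<longleftrightarrow>
     partial_order_on UNIV {(x, y). le x y} \<and>
     (\<forall>a b c. le b a \<and> le c a \<longrightarrow> le (b + c) a) \<and>
     (\<forall>a b c. le a b \<and> le a c \<longrightarrow> le a (a + b + c))"

definition poset_independent :: "('a::ab_group_add \<Rightarrow> 'a \<Rightarrow> bool) \<Rightarrow> 'a \<Rightarrow> 'a \<Rightarrow> bool" where
  "poset_independent le a b \<longleftrightarrow> le a (a + b)"

text \<open>Linear independence over Z/2Z: the only Z/2Z-linear combination (coefficients 0 or 1)
  of finitely many distinct elements of S that vanishes is the trivial one, i.e. no
  nonempty finite subset of S sums to 0.\<close>
definition lin_indep_Z2 :: "'a::ab_group_add set \<Rightarrow> bool" where
  "lin_indep_Z2 S \<longleftrightarrow> (\<forall>T. T \<subseteq> S \<and> finite T \<and> T \<noteq> {} \<longrightarrow> (\<Sum>x\<in>T. x) \<noteq> 0)"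

end

theory Submission
  imports Defs
begin

text \<open>Axiom (*) applied twice to x \<le> x gives 3x \<le> x, and (**) gives x \<le> 3x, so 3x = x,
  i.e. every element has order two. Axiom (**) then propagates independence to sums:
  if x \<le> x + y for all y in a finite set R, then x \<le> x + \<Sum>R. Now suppose a nonempty finite
  subset T of S sums to 0. It is not a singleton, since the elements of S are nonzero; for
  distinct u, v \<in> T we have v = u + \<Sum>(T - {u, v}) \<ge> u, and symmetrically u \<ge> v,
  contradicting antisymmetry.\<close>

context
  fixes le :: "'a::ab_group_add \<Rightarrow> 'a \<Rightarrow> bool"
  assumes additive: "additive_poset le"
begin

lemma additive_poset_refl: "le x x"
  using additive unfolding additive_poset_def partial_order_on_def preorder_on_def refl_on_def
  by blast

lemma additive_poset_antisym: "le x y \<Longrightarrow> le y x \<Longrightarrow> x = y"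
  using additive unfolding additive_poset_def partial_order_on_def antisym_def by blast

lemma additive_poset_add_below: "le b a \<Longrightarrow> le c a \<Longrightarrow> le (b + c) a"
  using additive unfolding additive_poset_def by blast

lemma additive_poset_below_add: "le a b \<Longrightarrow> le a c \<Longrightarrow> le a (a + b + c)"
  using additive unfolding additive_poset_def by blast

lemma additive_poset_add_self: "(x::'a) + x = 0"
proof -
  have "le (x + x) x"
    using additive_poset_add_below additive_poset_refl by blast
  then have "le (x + x + x) x"
    using additive_poset_add_below additive_poset_refl by (metis add.commute)
  moreover have "le x (x + x + x)"
    using additive_poset_below_add additive_poset_refl by blast
  ultimately have "x + x + x = x"
    using additive_poset_antisym by blast
  then show ?thesis by simp
qed

lemma additive_poset_below_add_sum:
  assumes "finite R" and "\<forall>y\<in>R. le x (x + y)"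
  shows "le x (x + (\<Sum>y\<in>R. y))"
  using assms
proof (induction R rule: finite_induct)
  case empty
  then show ?case using additive_poset_refl by simp
next
  case (insert y R)
  then have "le x (x + (x + (\<Sum>y\<in>R. y)) + (x + y))"
    using additive_poset_below_add by simp
  also have "x + (x + (\<Sum>y\<in>R. y)) + (x + y) = (x + x) + (x + ((\<Sum>y\<in>R. y) + y))"
    by (simp add: algebra_simps)
  also have "\<dots> = x + (\<Sum>y\<in>insert y R. y)"
    using insert.hyps additive_poset_add_self by (simp add: add.commute)
  finally show ?case .
qed

lemma additive_poset_below_of_sum_zero:
  assumes T: "finite T" "(\<Sum>w\<in>T. w) = 0"
    and uv: "u \<in> T" "v \<in> T" "u \<noteq> v"
    and indep: "\<forall>w\<in>T - {u, v}. le u (u + w)"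
  shows "le u v"
proof -
  let ?s = "\<Sum>w\<in>T - {u, v}. w"
  have "T - {u} - {v} = T - {u, v}"
    by blast
  then have "0 = u + (v + ?s)"
    using T uv sum.remove[of T u "\<lambda>w. w"] sum.remove[of "T - {u}" v "\<lambda>w. w"] by simp
  then have "v = (u + (v + ?s)) + v"
    by (metis add.left_neutral)
  also have "\<dots> = (u + ?s) + (v + v)"
    by (simp only: ac_simps)
  also have "\<dots> = u + ?s"
    using additive_poset_add_self by simp
  finally have v_eq: "v = u + ?s" .
  have "le u (u + ?s)"
    using additive_poset_below_add_sum[OF _ indep] T by simp
  then show ?thesis
    by (simp only: v_eq[symmetric])
qed

end

theorem lemma4p2:
  fixes le :: "'a::ab_group_add \<Rightarrow> 'a \<Rightarrow> bool" and S :: "'a set"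
  assumes "additive_poset le"
    and "\<forall>x\<in>S. x \<noteq> 0"
    and "\<forall>x\<in>S. \<forall>y\<in>S. x \<noteq> y \<longrightarrow> poset_independent le x y"
  shows "lin_indep_Z2 S"
  unfolding lin_indep_Z2_def
proof (intro allI impI notI)
  fix T assume T: "T \<subseteq> S \<and> finite T \<and> T \<noteq> {}" and sum_zero: "(\<Sum>x\<in>T. x) = 0"
  have below: "le u v" if uv: "u \<in> T" "v \<in> T" "u \<noteq> v" for u v
  proof -
    have "le u (u + w)" if "w \<in> T - {u, v}" for w
    proof -
      have "u \<in> S" "w \<in> S" "u \<noteq> w"
        using that uv T by auto
      then show ?thesis
        using assms(3) unfolding poset_independent_def by blast
    qed
    then show ?thesis
      using additive_poset_below_of_sum_zero[OF assms(1) _ sum_zero uv] T by blast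
  qed
  obtain x where x: "x \<in> T"
    using T by blast
  moreover have "T \<noteq> {x}"
  proof
    assume "T = {x}"
    then show False
      using sum_zero assms(2) T by auto
  qed
  ultimately obtain y where y: "y \<in> T" "y \<noteq> x"
    by blast
  show False
    using below[OF x y(1)] below[OF y(1) x] y(2) additive_poset_antisym[OF assms(1)] by blast
qed

end
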